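(* On the algebra $\mathcal O^\star(\mathbb C)$ of analytic functionals on $\mathbb C$ (with convolution), the seminorms $\|\alpha\|_C=\sum_{k\in\mathbb N}|\alpha_k|\,C^k$, $C\ge0$, are continuous and submultiplicative, and they form a fundamental system among all continuous submultiplicative seminorms: for every continuous submultiplicative seminorm $p$ on $\mathcal O^\star(\mathbb C)$ there exist $C\ge0$ and $M>0$ with $p(\alpha)\le M\|\alpha\|_C$ for all $\alpha$.
   Context: $\mathcal O(\mathbb C)$ is the algebra of entire functions with the topology of uniform convergence on compact sets; $\mathcal O^\star(\mathbb C)$ is its dual with the topology of uniform convergence on compact subsets of $\mathcal O(\mathbb C)$. For $\alpha\in\mathcal O^\star(\mathbb C)$, $\alpha_k=\frac1{k!}\alpha(t^k)$ where $t^k(x)=x^k$, so that $\alpha=\sum_k\alpha_k\tau^k$ with $\tau^k(u)=u^{(k)}(0)$. Convolution: $(\alpha*\beta)(u)=\alpha(s\mapsto\beta(t\mapsto u(s+t)))$; in coefficients $(\alpha*\beta)_k=\sum_{i=0}^k\alpha_i\beta_{k-i}$. *)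

theory Defs
  imports "HOL-Analysis.Analysis"
begin

definition unif_family_open :: "'a set set \<Rightarrow> ('a \<Rightarrow> 'b::metric_space) set \<Rightarrow> bool" where
  "unif_family_open F U \<longleftrightarrow>
     (\<forall>f\<in>U. \<exists>K\<in>F. \<exists>e>0. {g. \<forall>x\<in>K. dist (g x) (f x) < e} \<subseteq> U)"

definition unif_family_topology :: "'a set set \<Rightarrow> ('a \<Rightarrow> 'b::metric_space) topology" where
  "unif_family_topology F = topology (unif_family_open F)"

lemma istopology_unif_family_open:
  assumes "\<And>K L. K \<in> F \<Longrightarrow> L \<in> F \<Longrightarrow> K \<union> L \<in> F"
  shows "istopology (unif_family_open F :: ('a \<Rightarrow> 'b::metric_space) set \<Rightarrow> bool)"
  unfolding istopology_def
proof (intro conjI allI impI)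
  fix S T :: "('a \<Rightarrow> 'b) set"
  assume S: "unif_family_open F S" and T: "unif_family_open F T"
  show "unif_family_open F (S \<inter> T)"
    unfolding unif_family_open_def
  proof
    fix f assume f: "f \<in> S \<inter> T"
    obtain K1 e1 where K1: "K1 \<in> F" "e1 > 0" "{g. \<forall>x\<in>K1. dist (g x) (f x) < e1} \<subseteq> S"
      using S f unfolding unif_family_open_def by blast
    obtain K2 e2 where K2: "K2 \<in> F" "e2 > 0" "{g. \<forall>x\<in>K2. dist (g x) (f x) < e2} \<subseteq> T"
      using T f unfolding unif_family_open_def by blast
    have sub: "{g. \<forall>x\<in>K1 \<union> K2. dist (g x) (f x) < min e1 e2} \<subseteq> S \<inter> T"
    proof
      fix g assume "g \<in> {g. \<forall>x\<in>K1 \<union> K2. dist (g x) (f x) < min e1 e2}"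
      then have "g \<in> {g. \<forall>x\<in>K1. dist (g x) (f x) < e1}" "g \<in> {g. \<forall>x\<in>K2. dist (g x) (f x) < e2}"
        by simp_all
      then show "g \<in> S \<inter> T" using K1(3) K2(3) by blast
    qed
    have "K1 \<union> K2 \<in> F" using K1(1) K2(1) assms by blast
    moreover have "min e1 e2 > 0" using K1(2) K2(2) by simp
    ultimately show "\<exists>K\<in>F. \<exists>e>0. {g. \<forall>x\<in>K. dist (g x) (f x) < e} \<subseteq> S \<inter> T"
      using sub by blast
  qed
next
  fix UU :: "('a \<Rightarrow> 'b) set set"
  assume "\<forall>U\<in>UU. unif_family_open F U"
  then show "unif_family_open F (\<Union>UU)"
    unfolding unif_family_open_def
  proof (intro ballI)
    fix f assume op: "\<forall>U\<in>UU. \<forall>f\<in>U. \<exists>K\<in>F. \<exists>e>0. {g. \<forall>x\<in>K. dist (g x) (f x) < e} \<subseteq> U"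
      and f: "f \<in> \<Union>UU"
    from f obtain U where U: "U \<in> UU" "f \<in> U" by (rule UnionE)
    from op U obtain L e where L: "L \<in> F" "e > 0" "{g. \<forall>x\<in>L. dist (g x) (f x) < e} \<subseteq> U"
      by meson
    have "U \<subseteq> \<Union>UU" using U(1) by (rule Union_upper)
    then show "\<exists>K\<in>F. \<exists>e>0. {g. \<forall>x\<in>K. dist (g x) (f x) < e} \<subseteq> \<Union>UU"
      using L by (meson order_trans)
  qed
qed

definition entire_fns :: "(complex \<Rightarrow> complex) set" where
  "entire_fns = {f. f holomorphic_on UNIV}"

definition OC_top :: "(complex \<Rightarrow> complex) topology" where
  "OC_top = subtopology (unif_family_topology {K. compact K}) entire_fns"

text \<open>O*(C): continuous linear functionals on O(C). A functional is represented by a map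
  on all functions complex => complex, normalised to be 0 outside entire functions.\<close>
definition analytic_functionals :: "((complex \<Rightarrow> complex) \<Rightarrow> complex) set" where
  "analytic_functionals =
     {\<alpha>. (\<forall>u v. u \<in> entire_fns \<longrightarrow> v \<in> entire_fns \<longrightarrow> \<alpha> (\<lambda>z. u z + v z) = \<alpha> u + \<alpha> v)
        \<and> (\<forall>c u. u \<in> entire_fns \<longrightarrow> \<alpha> (\<lambda>z. c * u z) = c * \<alpha> u)
        \<and> continuous_map OC_top euclidean \<alpha>
        \<and> (\<forall>u. u \<notin> entire_fns \<longrightarrow> \<alpha> u = 0)}"

definition OS_top :: "((complex \<Rightarrow> complex) \<Rightarrow> complex) topology" where
  "OS_top = subtopology (unif_family_topology {B. compactin OC_top B}) analytic_functionals"

definition aconv :: "((complex \<Rightarrow> complex) \<Rightarrow> complex) \<Rightarrow> ((complex \<Rightarrow> complex) \<Rightarrow> complex)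
    \<Rightarrow> ((complex \<Rightarrow> complex) \<Rightarrow> complex)" where
  "aconv \<alpha> \<beta> = (\<lambda>u. if u \<in> entire_fns then \<alpha> (\<lambda>s. \<beta> (\<lambda>t. u (s + t))) else 0)"

definition acoeff :: "((complex \<Rightarrow> complex) \<Rightarrow> complex) \<Rightarrow> nat \<Rightarrow> complex" where
  "acoeff \<alpha> k = \<alpha> (\<lambda>x. x ^ k) / of_nat (fact k)"

definition normC :: "real \<Rightarrow> ((complex \<Rightarrow> complex) \<Rightarrow> complex) \<Rightarrow> real" where
  "normC C \<alpha> = (\<Sum>k. norm (acoeff \<alpha> k) * C ^ k)"

definition is_seminorm_OS :: "(((complex \<Rightarrow> complex) \<Rightarrow> complex) \<Rightarrow> real) \<Rightarrow> bool" where
  "is_seminorm_OS p \<longleftrightarrow>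
     (\<forall>\<alpha>\<in>analytic_functionals. \<forall>\<beta>\<in>analytic_functionals. p (\<lambda>u. \<alpha> u + \<beta> u) \<le> p \<alpha> + p \<beta>)
     \<and> (\<forall>\<alpha>\<in>analytic_functionals. \<forall>c::complex. p (\<lambda>u. c * \<alpha> u) = norm c * p \<alpha>)"

definition submultiplicative_OS :: "(((complex \<Rightarrow> complex) \<Rightarrow> complex) \<Rightarrow> real) \<Rightarrow> bool" where
  "submultiplicative_OS p \<longleftrightarrow>
     (\<forall>\<alpha>\<in>analytic_functionals. \<forall>\<beta>\<in>analytic_functionals. p (aconv \<alpha> \<beta>) \<le> p \<alpha> * p \<beta>)"

definition continuous_OS :: "(((complex \<Rightarrow> complex) \<Rightarrow> complex) \<Rightarrow> real) \<Rightarrow> bool" where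
  "continuous_OS p \<longleftrightarrow> continuous_map OS_top euclideanreal p"

end

theory Submission
  imports Defs "HOL-Complex_Analysis.Complex_Analysis"
begin

text \<open>Each \<open>\<parallel>\<alpha>\<parallel>\<^sub>C\<close> is submultiplicative because the coefficients of a convolution are the
  Cauchy product of the coefficients, and continuous because \<open>\<parallel>\<alpha>\<parallel>\<^sub>C\<close> is controlled by the values of
  \<open>\<alpha>\<close> on the compact set of entire functions \<open>(2Cz)\<^sup>k/k!\<close>, which tend to \<open>0\<close>.
  Conversely, \<open>\<tau>\<^sup>k\<close> is the \<open>k\<close>-fold convolution power of \<open>\<tau>\<^sup>1\<close>, so a submultiplicative seminorm \<open>p\<close>
  satisfies \<open>p(\<tau>\<^sup>k) \<le> p(\<tau>\<^sup>0) p(\<tau>\<^sup>1)\<^sup>k\<close>; since the Taylor truncations \<open>\<Sum>\<^sub>k\<^sub><\<^sub>n \<alpha>\<^sub>k \<tau>\<^sup>k\<close> converge to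
  \<open>\<alpha>\<close> uniformly on compact subsets of \<open>\<O>(\<complex>)\<close>, continuity of \<open>p\<close> gives
  \<open>p(\<alpha>) \<le> M \<parallel>\<alpha>\<parallel>\<^sub>C\<close> with \<open>C = p(\<tau>\<^sup>1)\<close>.\<close>

section \<open>Uniform convergence on a union-closed family of sets\<close>

definition union_closed_nonempty :: "'a set set \<Rightarrow> bool" where
  "union_closed_nonempty F \<longleftrightarrow> (\<forall>K L. K \<in> F \<longrightarrow> L \<in> F \<longrightarrow> K \<union> L \<in> F) \<and> F \<noteq> {}"

lemma union_closed_nonempty_compact: "union_closed_nonempty {K::'a::topological_space set. compact K}"
  unfolding union_closed_nonempty_def by (auto intro: compact_Un)

lemma union_closed_nonempty_compactin: "union_closed_nonempty {B. compactin X B}"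
  unfolding union_closed_nonempty_def by (auto intro: compactin_Un)

lemma openin_unif_family_topology:
  assumes "union_closed_nonempty F"
  shows "openin (unif_family_topology F) = (unif_family_open F :: ('a \<Rightarrow> 'b::metric_space) set \<Rightarrow> bool)"
  unfolding unif_family_topology_def
  by (rule topology_inverse', rule istopology_unif_family_open)
    (use assms in \<open>auto simp: union_closed_nonempty_def\<close>)

lemma topspace_unif_family_topology:
  assumes "union_closed_nonempty F"
  shows "topspace (unif_family_topology F :: ('a \<Rightarrow> 'b::metric_space) topology) = UNIV"
proof -
  obtain K where "K \<in> F" using assms unfolding union_closed_nonempty_def by blast
  then have "unif_family_open F (UNIV :: ('a \<Rightarrow> 'b) set)"
    unfolding unif_family_open_def by (auto intro!: exI[of _ 1])
  then show ?thesis
    using openin_unif_family_topology[OF assms] by (metis openin_subset top.extremum_unique)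
qed

text \<open>The basic sets \<open>{g. \<forall>x\<in>K. dist (g x) (f x) < e}\<close> need not be open (the supremum over \<open>K\<close>
  may not be attained), but each contains an open neighbourhood of \<open>f\<close>.\<close>

lemma unif_family_open_nbhd:
  fixes f :: "'a \<Rightarrow> 'b::metric_space"
  assumes "union_closed_nonempty F" "K \<in> F" "e > 0"
  shows "\<exists>N. openin (unif_family_topology F) N \<and> f \<in> N \<and> N \<subseteq> {g. \<forall>x\<in>K. dist (g x) (f x) < e}"
proof -
  define N where "N = {g. \<exists>d>0. \<forall>x\<in>K. dist (g x) (f x) < e - d}"
  have "unif_family_open F N"
    unfolding unif_family_open_def
  proof
    fix g assume "g \<in> N"
    then obtain d where d: "d > 0" "\<forall>x\<in>K. dist (g x) (f x) < e - d" by (auto simp: N_def)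
    have "{h. \<forall>x\<in>K. dist (h x) (g x) < d/2} \<subseteq> N"
    proof
      fix h assume h: "h \<in> {h. \<forall>x\<in>K. dist (h x) (g x) < d/2}"
      have "dist (h x) (f x) < e - d/2" if "x \<in> K" for x
      proof -
        have "dist (h x) (g x) < d/2" "dist (g x) (f x) < e - d" using h d that by auto
        then show ?thesis using dist_triangle[of "h x" "f x" "g x"] by linarith
      qed
      then show "h \<in> N" unfolding N_def using d by (auto intro!: exI[of _ "d/2"])
    qed
    then show "\<exists>K\<in>F. \<exists>e>0. {h. \<forall>x\<in>K. dist (h x) (g x) < e} \<subseteq> N"
      using assms(2) d by (auto intro!: bexI[of _ K] exI[of _ "d/2"])
  qed
  moreover have "f \<in> N" unfolding N_def using assms(3) by (auto intro!: exI[of _ "e/2"])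
  moreover have "N \<subseteq> {g. \<forall>x\<in>K. dist (g x) (f x) < e}" unfolding N_def by force
  ultimately show ?thesis unfolding openin_unif_family_topology[OF assms(1)] by blast
qed

lemma continuous_map_unif_family_topologyD:
  fixes \<phi> :: "('a \<Rightarrow> 'b::metric_space) \<Rightarrow> 'c::metric_space"
  assumes F: "union_closed_nonempty F"
    and cont: "continuous_map (subtopology (unif_family_topology F) S) euclidean \<phi>"
    and f: "f \<in> S" and \<epsilon>: "\<epsilon> > 0"
  shows "\<exists>K\<in>F. \<exists>e>0. \<forall>g\<in>S. (\<forall>x\<in>K. dist (g x) (f x) < e) \<longrightarrow> dist (\<phi> g) (\<phi> f) < \<epsilon>"
proof -
  let ?X = "subtopology (unif_family_topology F) S"
  have top: "topspace ?X = S" by (simp add: topspace_unif_family_topology[OF F])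
  have "openin ?X {g \<in> topspace ?X. \<phi> g \<in> ball (\<phi> f) \<epsilon>}"
    by (rule openin_continuous_map_preimage[OF cont]) simp
  then have "openin ?X {g \<in> S. \<phi> g \<in> ball (\<phi> f) \<epsilon>}" by (simp only: top)
  then obtain T where T: "openin (unif_family_topology F) T" "{g \<in> S. \<phi> g \<in> ball (\<phi> f) \<epsilon>} = T \<inter> S"
    by (auto simp: openin_subtopology)
  have "\<phi> f \<in> ball (\<phi> f) \<epsilon>" using \<epsilon> by simp
  then have "f \<in> T" using T(2) f by blast
  then obtain K e where "K \<in> F" "e > 0" "{g. \<forall>x\<in>K. dist (g x) (f x) < e} \<subseteq> T"
    using T(1) unfolding openin_unif_family_topology[OF F] unif_family_open_def by blast
  moreover have "dist (\<phi> g) (\<phi> f) < \<epsilon>"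
    if "g \<in> S" "\<forall>x\<in>K. dist (g x) (f x) < e" for g
  proof -
    have "g \<in> T \<inter> S" using that \<open>{g. \<forall>x\<in>K. dist (g x) (f x) < e} \<subseteq> T\<close> by blast
    then have "\<phi> g \<in> ball (\<phi> f) \<epsilon>" using T(2) by blast
    then show ?thesis by (simp add: dist_commute)
  qed
  ultimately show ?thesis by blast
qed

lemma continuous_map_unif_family_topologyI:
  fixes \<phi> :: "('a \<Rightarrow> 'b::metric_space) \<Rightarrow> 'c::metric_space"
  assumes F: "union_closed_nonempty F"
    and eps: "\<And>f \<epsilon>. f \<in> S \<Longrightarrow> \<epsilon> > 0 \<Longrightarrow>
      \<exists>K\<in>F. \<exists>e>0. \<forall>g\<in>S. (\<forall>x\<in>K. dist (g x) (f x) < e) \<longrightarrow> dist (\<phi> g) (\<phi> f) < \<epsilon>"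
  shows "continuous_map (subtopology (unif_family_topology F) S) euclidean \<phi>"
  unfolding continuous_map_def
proof (intro conjI allI impI)
  let ?X = "subtopology (unif_family_topology F) S"
  have top: "topspace ?X = S" by (simp add: topspace_unif_family_topology[OF F])
  show "\<phi> \<in> topspace ?X \<rightarrow> topspace euclidean" by simp
  fix U :: "'c set" assume U: "openin euclidean U"
  show "openin ?X {g \<in> topspace ?X. \<phi> g \<in> U}" (is "openin ?X ?P")
  proof (subst openin_subopen, intro ballI)
    fix f assume "f \<in> ?P"
    then have f: "f \<in> S" "\<phi> f \<in> U" using top by auto
    obtain \<epsilon> where \<epsilon>: "\<epsilon> > 0" "ball (\<phi> f) \<epsilon> \<subseteq> U" using U f by (auto simp: open_contains_ball)
    obtain K e where Ke: "K \<in> F" "e > 0"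
      "\<forall>g\<in>S. (\<forall>x\<in>K. dist (g x) (f x) < e) \<longrightarrow> dist (\<phi> g) (\<phi> f) < \<epsilon>"
      using eps f \<epsilon> by blast
    obtain N where N: "openin (unif_family_topology F) N" "f \<in> N"
      "N \<subseteq> {g. \<forall>x\<in>K. dist (g x) (f x) < e}"
      using unif_family_open_nbhd[OF F Ke(1,2)] by blast
    have "N \<inter> S \<subseteq> ?P"
    proof
      fix g assume g: "g \<in> N \<inter> S"
      then have "dist (\<phi> g) (\<phi> f) < \<epsilon>" using Ke(3) N(3) by blast
      then have "\<phi> g \<in> U" using \<epsilon>(2) by (auto simp: dist_commute)
      then show "g \<in> ?P" using g top by auto
    qed
    moreover have "openin ?X (N \<inter> S)" using N(1) by (auto simp: openin_subtopology)
    ultimately show "\<exists>T. openin ?X T \<and> f \<in> T \<and> T \<subseteq> ?P" using N(2) f by blast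
  qed
qed

lemma continuous_map_unif_family_topology_iff:
  fixes \<phi> :: "('a \<Rightarrow> 'b::metric_space) \<Rightarrow> 'c::metric_space"
  assumes F: "union_closed_nonempty F"
  shows "continuous_map (subtopology (unif_family_topology F) S) euclidean \<phi> \<longleftrightarrow>
    (\<forall>f\<in>S. \<forall>\<epsilon>>0. \<exists>K\<in>F. \<exists>e>0. \<forall>g\<in>S. (\<forall>x\<in>K. dist (g x) (f x) < e) \<longrightarrow> dist (\<phi> g) (\<phi> f) < \<epsilon>)"
proof
  show "\<forall>f\<in>S. \<forall>\<epsilon>>0. \<exists>K\<in>F. \<exists>e>0. \<forall>g\<in>S. (\<forall>x\<in>K. dist (g x) (f x) < e) \<longrightarrow> dist (\<phi> g) (\<phi> f) < \<epsilon>"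
    if "continuous_map (subtopology (unif_family_topology F) S) euclidean \<phi>"
    using continuous_map_unif_family_topologyD[OF F that] by blast
qed (rule continuous_map_unif_family_topologyI[OF F], blast)

lemma entire_fns_holomorphic_on: "u \<in> entire_fns \<Longrightarrow> u holomorphic_on S"
  unfolding entire_fns_def using holomorphic_on_subset by blast

lemma entire_fns_add [intro]: "u \<in> entire_fns \<Longrightarrow> v \<in> entire_fns \<Longrightarrow> (\<lambda>z. u z + v z) \<in> entire_fns"
  by (auto simp: entire_fns_def intro!: holomorphic_intros)

lemma entire_fns_diff [intro]: "u \<in> entire_fns \<Longrightarrow> v \<in> entire_fns \<Longrightarrow> (\<lambda>z. u z - v z) \<in> entire_fns"
  by (auto simp: entire_fns_def intro!: holomorphic_intros)

lemma entire_fns_cmult [intro]: "u \<in> entire_fns \<Longrightarrow> (\<lambda>z. c * u z) \<in> entire_fns"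
  by (auto simp: entire_fns_def intro!: holomorphic_intros)

lemma entire_fns_const [intro]: "(\<lambda>z. c) \<in> entire_fns"
  by (auto simp: entire_fns_def intro!: holomorphic_intros)

lemma entire_fns_power [intro]: "(\<lambda>z. z ^ k) \<in> entire_fns"
  by (auto simp: entire_fns_def intro!: holomorphic_intros)

lemma entire_fns_monomial [intro]: "(\<lambda>z. c * z ^ k) \<in> entire_fns"
  by (auto simp: entire_fns_def intro!: holomorphic_intros)

lemma entire_fns_sum [intro]:
  "(\<And>i. i \<in> I \<Longrightarrow> f i \<in> entire_fns) \<Longrightarrow> (\<lambda>z. \<Sum>i\<in>I. f i z) \<in> entire_fns"
  unfolding entire_fns_def by (auto intro!: holomorphic_intros)

lemma entire_fns_translate [intro]:
  assumes "u \<in> entire_fns" shows "(\<lambda>t. u (s + t)) \<in> entire_fns"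
proof -
  have "(\<lambda>t. s + t) holomorphic_on UNIV" by (intro holomorphic_intros)
  moreover have "u holomorphic_on (\<lambda>t. s + t) ` UNIV" using assms by (auto simp: entire_fns_def)
  ultimately show ?thesis using holomorphic_on_compose by (fastforce simp: o_def entire_fns_def)
qed

lemma entire_fns_higher_deriv [intro]: "u \<in> entire_fns \<Longrightarrow> (deriv ^^ k) u \<in> entire_fns"
  by (auto simp: entire_fns_def intro!: holomorphic_higher_deriv)

lemma higher_deriv_translate:
  assumes "u \<in> entire_fns"
  shows "(deriv ^^ k) (\<lambda>t. u (s + t)) = (\<lambda>t. (deriv ^^ k) u (s + t))"
proof (induction k)
  case (Suc k)
  have "deriv (\<lambda>t. (deriv ^^ k) u (s + t)) t = deriv ((deriv ^^ k) u) (s + t)" for t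
  proof -
    have "((deriv ^^ k) u has_field_derivative deriv ((deriv ^^ k) u) (s + t)) (at (s + t))"
      using entire_fns_higher_deriv[OF assms]
      by (intro holomorphic_derivI[of _ UNIV]) (auto simp: entire_fns_def)
    moreover have "((\<lambda>t. s + t) has_field_derivative 1) (at t)"
      by (auto intro!: derivative_eq_intros)
    ultimately have "((\<lambda>t. (deriv ^^ k) u (s + t)) has_field_derivative
        deriv ((deriv ^^ k) u) (s + t) * 1) (at t)"
      by (rule DERIV_chain2)
    then show ?thesis by (simp add: DERIV_imp_deriv)
  qed
  then show ?case using Suc by auto
qed simp

lemma compactin_OC_top_bounded:
  assumes B: "compactin OC_top B" and K: "compact K"
  shows "\<exists>S>0. \<forall>u\<in>B. \<forall>z\<in>K. norm (u z) \<le> S"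
proof -
  let ?X = "unif_family_topology {K::complex set. compact K} :: (complex \<Rightarrow> complex) topology"
  have cB: "compactin ?X B" and BE: "B \<subseteq> entire_fns"
    using B by (auto simp: OC_top_def compactin_subtopology)
  have "\<forall>u. \<exists>N. openin ?X N \<and> u \<in> N \<and> N \<subseteq> {g. \<forall>x\<in>K. dist (g x) (u x) < 1}"
    using unif_family_open_nbhd[OF union_closed_nonempty_compact, of K 1] K by auto
  then obtain N where N: "\<And>u. openin ?X (N u)" "\<And>u. u \<in> N u"
    "\<And>u. N u \<subseteq> {g. \<forall>x\<in>K. dist (g x) (u x) < 1}"
    by (auto dest!: choice)
  have "\<forall>U\<in>N ` B. openin ?X U" "B \<subseteq> \<Union>(N ` B)" using N(1,2) by blast+
  then obtain F where F: "finite F" "F \<subseteq> N ` B" "B \<subseteq> \<Union>F"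
    using cB unfolding compactin_def by meson
  obtain B' where B': "B' \<subseteq> B" "finite B'" "F = N ` B'" using finite_subset_image[OF F(1,2)] by blast
  have "compact (\<Union>u\<in>B'. u ` K)"
    using B'(1,2) BE K
    by (intro compact_UN compact_continuous_image holomorphic_on_imp_continuous_on
        entire_fns_holomorphic_on) auto
  then have "bounded (\<Union>u\<in>B'. u ` K)" by (rule compact_imp_bounded)
  then obtain b where "b > 0" "\<forall>y\<in>(\<Union>u\<in>B'. u ` K). norm y \<le> b"
    by (auto simp: bounded_pos)
  then have b: "b > 0" "\<forall>u\<in>B'. \<forall>z\<in>K. norm (u z) \<le> b" by auto
  have "norm (u z) \<le> b + 1" if u: "u \<in> B" and z: "z \<in> K" for u z
  proof -
    obtain u' where u': "u' \<in> B'" "u \<in> N u'" using u F(3) B'(3) by blast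
    then have "dist (u z) (u' z) < 1" using N(3)[of u'] z by blast
    moreover have "norm (u' z) \<le> b" using b u'(1) z by blast
    ultimately show ?thesis using norm_triangle_sub[of "u z" "u' z"] by (simp add: dist_norm)
  qed
  then show ?thesis using b(1) by (intro exI[of _ "b + 1"]) auto
qed

lemma taylor_remainder_bound:
  assumes u: "u \<in> entire_fns" and R: "R > 0" and S: "\<forall>z\<in>cball 0 (2*R). norm (u z) \<le> S"
    and z: "norm z \<le> R"
  shows "norm (u z - (\<Sum>k<n. (deriv ^^ k) u 0 / fact k * z ^ k)) \<le> 2 * S * (1/2) ^ n"
proof -
  define f where "f = (\<lambda>k. (deriv ^^ k) u 0 / fact k * z ^ k)"
  have "(\<lambda>k. (deriv ^^ k) u 0 / fact k * (z - 0) ^ k) sums u z"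
    by (rule holomorphic_power_series[where r = "2*R+1"])
      (use u z R in \<open>auto intro: entire_fns_holomorphic_on\<close>)
  then have "f sums u z" by (simp only: f_def diff_zero)
  have "norm (u 0) \<le> S" using S R by auto
  then have S0: "S \<ge> 0" using norm_ge_zero order_trans by blast
  have nf: "norm (f k) \<le> S * (1/2) ^ k" for k
  proof -
    have "norm ((deriv ^^ k) u 0) \<le> fact k * S / (2*R) ^ k"
      using S R u by (intro Cauchy_inequality)
        (auto intro: holomorphic_on_imp_continuous_on entire_fns_holomorphic_on)
    then have "norm (f k) \<le> (fact k * S / (2*R) ^ k) / fact k * R ^ k"
      unfolding f_def norm_mult norm_divide norm_power norm_fact
      using z S0 R by (intro mult_mono divide_right_mono power_mono) auto
    also have "\<dots> = S * (1/2) ^ k" using R by (simp add: field_simps power_mult_distrib)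
    finally show ?thesis .
  qed
  have sg: "summable (\<lambda>j. S * (1/2::real) ^ (j + n))"
    by (intro summable_mult summable_ignore_initial_segment summable_geometric) simp
  have snf: "summable (\<lambda>j. norm (f (j + n)))"
    by (rule summable_comparison_test[OF _ sg]) (use nf in auto)
  have "u z - (\<Sum>k<n. f k) = (\<Sum>j. f (j + n))"
    using suminf_split_initial_segment[OF sums_summable[OF \<open>f sums u z\<close>], of n]
      sums_unique[OF \<open>f sums u z\<close>] by simp
  then have "norm (u z - (\<Sum>k<n. f k)) \<le> (\<Sum>j. norm (f (j + n)))" using summable_norm[OF snf] by simp
  also have "\<dots> \<le> (\<Sum>j. S * (1/2::real) ^ (j + n))" by (rule suminf_le[OF _ snf sg]) (use nf in auto)
  also have "\<dots> = S * (1/2) ^ n * (\<Sum>j. (1/2::real) ^ j)"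
    using suminf_mult[OF summable_geometric[of "1/2::real"], of "S * (1/2)^n"]
    by (simp add: power_add mult_ac)
  also have "\<dots> = 2 * S * (1/2) ^ n" using suminf_geometric[of "1/2::real"] by simp
  finally show ?thesis by (simp add: f_def)
qed

lemma analytic_functional_add:
  "\<alpha> \<in> analytic_functionals \<Longrightarrow> u \<in> entire_fns \<Longrightarrow> v \<in> entire_fns \<Longrightarrow> \<alpha> (\<lambda>z. u z + v z) = \<alpha> u + \<alpha> v"
  by (simp add: analytic_functionals_def)

lemma analytic_functional_cmult:
  "\<alpha> \<in> analytic_functionals \<Longrightarrow> u \<in> entire_fns \<Longrightarrow> \<alpha> (\<lambda>z. c * u z) = c * \<alpha> u"
  by (simp add: analytic_functionals_def)

lemma analytic_functional_zero: "\<alpha> \<in> analytic_functionals \<Longrightarrow> \<alpha> (\<lambda>z. 0) = 0"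
  using analytic_functional_cmult[of \<alpha> "\<lambda>z. 0" 0] by auto

lemma analytic_functional_diff:
  assumes "\<alpha> \<in> analytic_functionals" "u \<in> entire_fns" "v \<in> entire_fns"
  shows "\<alpha> (\<lambda>z. u z - v z) = \<alpha> u - \<alpha> v"
  using analytic_functional_add[OF assms(1,2) entire_fns_cmult[OF assms(3), of "-1"]]
    analytic_functional_cmult[OF assms(1,3), of "-1"]
  by simp

lemma analytic_functional_sum:
  assumes \<alpha>: "\<alpha> \<in> analytic_functionals" and "finite I" and "\<And>i. i \<in> I \<Longrightarrow> f i \<in> entire_fns"
  shows "\<alpha> (\<lambda>z. \<Sum>i\<in>I. f i z) = (\<Sum>i\<in>I. \<alpha> (f i))"
  using assms(2,3)
proof (induction I rule: finite_induct)
  case empty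
  then show ?case using analytic_functional_zero[OF \<alpha>] by simp
next
  case (insert x F)
  then show ?case
    using analytic_functional_add[OF \<alpha>, of "f x" "\<lambda>z. \<Sum>i\<in>F. f i z"] by auto
qed

text \<open>Continuity at \<open>0\<close> gives a compact set, which lies in some \<open>cball 0 R\<close>; homogeneity turns
  this into the usual estimate of an analytic functional by a supremum norm.\<close>

lemma analytic_functional_bound:
  assumes \<alpha>: "\<alpha> \<in> analytic_functionals"
  shows "\<exists>R>0. \<exists>M>0. \<forall>u\<in>entire_fns. \<forall>S>0.
    (\<forall>z\<in>cball 0 R. norm (u z) \<le> S) \<longrightarrow> norm (\<alpha> u) \<le> M * S"
proof -
  have "continuous_map (subtopology (unif_family_topology {K::complex set. compact K}) entire_fns)
      euclidean \<alpha>"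
    using \<alpha> by (simp add: analytic_functionals_def OC_top_def)
  then obtain K e where K: "compact K" and e: "e > 0" and Ke:
    "\<And>g. g \<in> entire_fns \<Longrightarrow> \<forall>x\<in>K. dist (g x) 0 < e \<Longrightarrow> dist (\<alpha> g) (\<alpha> (\<lambda>z. 0)) < 1"
    unfolding continuous_map_unif_family_topology_iff[OF union_closed_nonempty_compact]
    using entire_fns_const[of 0] zero_less_one by (metis mem_Collect_eq)
  obtain R where R: "R > 0" "\<forall>x\<in>K. norm x \<le> R"
    using compact_imp_bounded[OF K] by (auto simp: bounded_pos)
  have "norm (\<alpha> u) \<le> (2/e) * S"
    if u: "u \<in> entire_fns" and S: "S > 0" and bound: "\<forall>z\<in>cball 0 R. norm (u z) \<le> S" for u S
  proof -
    define t where "t = complex_of_real (e / (2*S))"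
    have nt: "norm t = e / (2*S)" unfolding t_def norm_of_real using S e by auto
    have "dist (t * u x) 0 < e" if "x \<in> K" for x
    proof -
      have "norm (u x) \<le> S" using bound R that by auto
      then have "norm t * norm (u x) \<le> norm t * S" by (rule mult_left_mono) simp
      also have "\<dots> < e" using nt S e by simp
      finally show ?thesis by (simp add: norm_mult)
    qed
    then have "dist (\<alpha> (\<lambda>z. t * u z)) (\<alpha> (\<lambda>z. 0)) < 1"
      by (intro Ke entire_fns_cmult[OF u]) simp
    then have "e / (2*S) * norm (\<alpha> u) < 1"
      using analytic_functional_cmult[OF \<alpha> u] analytic_functional_zero[OF \<alpha>]
      by (simp add: dist_norm norm_mult nt)
    then show ?thesis using S e by (simp add: field_simps)
  qed
  then show ?thesis using R(1) e by (intro exI[of _ R] conjI exI[of _ "2/e"]) auto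
qed

lemma acoeff_bound:
  assumes "\<alpha> \<in> analytic_functionals"
  shows "\<exists>R>0. \<exists>M>0. \<forall>k. norm (acoeff \<alpha> k) \<le> M * R ^ k / fact k"
proof -
  obtain R M where R: "R > 0" and M: "M > 0" and bound: "\<forall>u\<in>entire_fns. \<forall>S>0.
      (\<forall>z\<in>cball 0 R. norm (u z) \<le> S) \<longrightarrow> norm (\<alpha> u) \<le> M * S"
    using analytic_functional_bound[OF assms] by blast
  have "norm (\<alpha> (\<lambda>z. z ^ k)) \<le> M * R ^ k" for k
  proof -
    have "\<forall>z::complex\<in>cball 0 R. norm (z ^ k) \<le> R ^ k" by (auto simp: norm_power intro!: power_mono)
    then show ?thesis using bound entire_fns_power[of k] R by simp
  qed
  then have "norm (acoeff \<alpha> k) \<le> M * R ^ k / fact k" for k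
    by (simp add: acoeff_def norm_divide divide_right_mono)
  then show ?thesis using R M by blast
qed

lemma summable_acoeff:
  assumes "\<alpha> \<in> analytic_functionals" "C \<ge> 0"
  shows "summable (\<lambda>k. norm (acoeff \<alpha> k) * C ^ k)"
proof -
  obtain R M where bound: "\<forall>k. norm (acoeff \<alpha> k) \<le> M * R ^ k / fact k"
    using acoeff_bound[OF assms(1)] by blast
  have "summable (\<lambda>k. M * ((R * C) ^ k / fact k))"
    using summable_mult[OF summable_exp[of "R * C"], of M] by (simp add: field_simps)
  moreover have "norm (norm (acoeff \<alpha> k) * C ^ k) \<le> M * ((R * C) ^ k / fact k)" for k
    using mult_right_mono[OF bound[rule_format, of k], of "C ^ k"] assms(2)
    by (simp add: power_mult_distrib)
  ultimately show ?thesis by (rule summable_comparison_test')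
qed

section \<open>The seminorms \<open>normC C\<close>\<close>

lemma acoeff_add: "acoeff (\<lambda>u. \<alpha> u + \<beta> u) k = acoeff \<alpha> k + acoeff \<beta> k"
  by (simp add: acoeff_def add_divide_distrib)

lemma acoeff_cmult: "acoeff (\<lambda>u. c * \<alpha> u) k = c * acoeff \<alpha> k"
  by (simp add: acoeff_def)

lemma is_seminorm_OS_normC:
  assumes C: "C \<ge> 0"
  shows "is_seminorm_OS (normC C)"
  unfolding is_seminorm_OS_def
proof (intro conjI ballI allI)
  fix \<alpha> \<beta> assume \<alpha>: "\<alpha> \<in> analytic_functionals" and \<beta>: "\<beta> \<in> analytic_functionals"
  have sa: "summable (\<lambda>k. norm (acoeff \<alpha> k) * C ^ k)"
    and sb: "summable (\<lambda>k. norm (acoeff \<beta> k) * C ^ k)"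
    using summable_acoeff \<alpha> \<beta> C by auto
  have le: "norm (acoeff (\<lambda>u. \<alpha> u + \<beta> u) k) * C ^ k
      \<le> norm (acoeff \<alpha> k) * C ^ k + norm (acoeff \<beta> k) * C ^ k" for k
    unfolding acoeff_add distrib_right[symmetric]
    using C by (intro mult_right_mono norm_triangle_ineq) auto
  have "summable (\<lambda>k. norm (acoeff (\<lambda>u. \<alpha> u + \<beta> u) k) * C ^ k)"
    by (rule summable_comparison_test[OF _ summable_add[OF sa sb]]) (use le C in auto)
  then show "normC C (\<lambda>u. \<alpha> u + \<beta> u) \<le> normC C \<alpha> + normC C \<beta>"
    unfolding normC_def suminf_add[OF sa sb] by (rule suminf_le[OF le _ summable_add[OF sa sb]])
next
  fix \<alpha> c assume \<alpha>: "\<alpha> \<in> analytic_functionals"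
  have "summable (\<lambda>k. norm (acoeff \<alpha> k) * C ^ k)" using summable_acoeff \<alpha> C by auto
  from suminf_mult[OF this, of "norm c"]
  show "normC C (\<lambda>u. c * \<alpha> u) = norm c * normC C \<alpha>"
    unfolding normC_def acoeff_cmult norm_mult by (simp add: mult.assoc)
qed

lemma analytic_functional_translate_power:
  assumes "\<beta> \<in> analytic_functionals"
  shows "\<beta> (\<lambda>t. (s + t) ^ k) = (\<Sum>i\<le>k. of_nat (k choose i) * \<beta> (\<lambda>t. t ^ (k - i)) * s ^ i)"
proof -
  have "\<beta> (\<lambda>t. (s + t) ^ k) = \<beta> (\<lambda>t. \<Sum>i\<le>k. (of_nat (k choose i) * s ^ i) * t ^ (k - i))"
    by (simp add: binomial_ring)
  also have "\<dots> = (\<Sum>i\<le>k. \<beta> (\<lambda>t. (of_nat (k choose i) * s ^ i) * t ^ (k - i)))"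
    by (rule analytic_functional_sum[OF assms]) auto
  also have "\<dots> = (\<Sum>i\<le>k. (of_nat (k choose i) * s ^ i) * \<beta> (\<lambda>t. t ^ (k - i)))"
    using analytic_functional_cmult[OF assms entire_fns_power] by simp
  finally show ?thesis by (simp add: mult_ac)
qed

lemma acoeff_aconv:
  assumes \<alpha>: "\<alpha> \<in> analytic_functionals" and \<beta>: "\<beta> \<in> analytic_functionals"
  shows "acoeff (aconv \<alpha> \<beta>) k = (\<Sum>i\<le>k. acoeff \<alpha> i * acoeff \<beta> (k - i))"
proof -
  have "aconv \<alpha> \<beta> (\<lambda>x. x ^ k) = \<alpha> (\<lambda>s. \<Sum>i\<le>k. (of_nat (k choose i) * \<beta> (\<lambda>t. t ^ (k - i))) * s ^ i)"
    using entire_fns_power[of k] by (simp add: aconv_def analytic_functional_translate_power[OF \<beta>])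
  also have "\<dots> = (\<Sum>i\<le>k. \<alpha> (\<lambda>s. (of_nat (k choose i) * \<beta> (\<lambda>t. t ^ (k - i))) * s ^ i))"
    by (rule analytic_functional_sum[OF \<alpha>]) auto
  also have "\<dots> = (\<Sum>i\<le>k. of_nat (k choose i) * \<beta> (\<lambda>t. t ^ (k - i)) * \<alpha> (\<lambda>s. s ^ i))"
    using analytic_functional_cmult[OF \<alpha> entire_fns_power] by simp
  finally have "acoeff (aconv \<alpha> \<beta>) k
      = (\<Sum>i\<le>k. of_nat (k choose i) * \<beta> (\<lambda>t. t ^ (k - i)) * \<alpha> (\<lambda>s. s ^ i) / fact k)"
    by (simp add: acoeff_def sum_divide_distrib)
  also have "\<dots> = (\<Sum>i\<le>k. acoeff \<alpha> i * acoeff \<beta> (k - i))"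
  proof (rule sum.cong[OF refl])
    fix i assume "i \<in> {..k}"
    then have "(of_nat (k choose i) :: complex) = fact k / (fact i * fact (k - i))"
      by (simp add: binomial_fact)
    then show "of_nat (k choose i) * \<beta> (\<lambda>t. t ^ (k - i)) * \<alpha> (\<lambda>s. s ^ i) / fact k
        = acoeff \<alpha> i * acoeff \<beta> (k - i)"
      by (simp add: acoeff_def field_simps)
  qed
  finally show ?thesis .
qed

lemma weighted_norm_Cauchy_product_le:
  fixes a b :: "nat \<Rightarrow> 'a::real_normed_algebra"
  assumes C: "C \<ge> 0"
    and sa: "summable (\<lambda>k. norm (a k) * C ^ k)" and sb: "summable (\<lambda>k. norm (b k) * C ^ k)"
  shows "(\<Sum>k. norm (\<Sum>i\<le>k. a i * b (k - i)) * C ^ k)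
    \<le> (\<Sum>k. norm (a k) * C ^ k) * (\<Sum>k. norm (b k) * C ^ k)"
proof -
  define x where "x = (\<lambda>k. norm (a k) * C ^ k)"
  define y where "y = (\<lambda>k. norm (b k) * C ^ k)"
  have snx: "summable (\<lambda>k. norm (x k))" and sny: "summable (\<lambda>k. norm (y k))"
    using sa sb C by (simp_all add: x_def y_def abs_mult)
  have le: "norm (\<Sum>i\<le>k. a i * b (k - i)) * C ^ k \<le> (\<Sum>i\<le>k. x i * y (k - i))" for k
  proof -
    have "norm (\<Sum>i\<le>k. a i * b (k - i)) * C ^ k \<le> (\<Sum>i\<le>k. norm (a i) * norm (b (k - i))) * C ^ k"
      using C by (intro mult_right_mono order_trans[OF norm_sum] sum_mono norm_mult_ineq) auto
    also have "\<dots> = (\<Sum>i\<le>k. x i * y (k - i))"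
      unfolding sum_distrib_right x_def y_def
      by (intro sum.cong refl) (simp add: power_add[symmetric] mult_ac)
    finally show ?thesis .
  qed
  have sc: "summable (\<lambda>k. \<Sum>i\<le>k. x i * y (k - i))" by (rule summable_Cauchy_product[OF snx sny])
  have "(\<Sum>k. norm (\<Sum>i\<le>k. a i * b (k - i)) * C ^ k) \<le> (\<Sum>k. \<Sum>i\<le>k. x i * y (k - i))"
    by (rule suminf_le[OF le summable_comparison_test[OF _ sc] sc]) (use le C in auto)
  also have "\<dots> = suminf x * suminf y" by (rule Cauchy_product[OF snx sny, symmetric])
  finally show ?thesis by (simp add: x_def y_def)
qed

lemma submultiplicative_OS_normC:
  assumes "C \<ge> 0"
  shows "submultiplicative_OS (normC C)"
  unfolding submultiplicative_OS_def normC_def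
  using weighted_norm_Cauchy_product_le[OF assms summable_acoeff summable_acoeff] assms
  by (simp add: acoeff_aconv)

definition scaled_monomial :: "real \<Rightarrow> nat \<Rightarrow> complex \<Rightarrow> complex" where
  "scaled_monomial C k = (\<lambda>z. of_real (2*C) ^ k / fact k * z ^ k)"

lemma scaled_monomial_limit:
  assumes C: "C \<ge> 0"
  shows "limitin (unif_family_topology {K::complex set. compact K}) (scaled_monomial C) (\<lambda>z. 0)
    sequentially"
  unfolding limitin_def topspace_unif_family_topology[OF union_closed_nonempty_compact]
proof (intro conjI allI impI UNIV_I, elim conjE)
  fix U :: "(complex \<Rightarrow> complex) set"
  assume "openin (unif_family_topology {K. compact K}) U" "(\<lambda>z. 0) \<in> U"
  then obtain K e where K: "compact K" and e: "e > 0" and KU: "{g. \<forall>x\<in>K. dist (g x) 0 < e} \<subseteq> U"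
    unfolding openin_unif_family_topology[OF union_closed_nonempty_compact] unif_family_open_def
    by fastforce
  obtain R where R: "\<forall>x\<in>K. norm x \<le> R" using compact_imp_bounded[OF K] by (auto simp: bounded_iff)
  have "(\<lambda>k. inverse (fact k) * (2*C*R) ^ k) \<longlonglongrightarrow> 0"
    by (rule summable_LIMSEQ_zero[OF summable_exp])
  then have "eventually (\<lambda>k. inverse (fact k) * (2*C*R) ^ k < e) sequentially"
    using e by (rule order_tendstoD)
  then show "eventually (\<lambda>k. scaled_monomial C k \<in> U) sequentially"
  proof (rule eventually_mono)
    fix k assume small: "inverse (fact k) * (2*C*R) ^ k < e"
    have "dist (scaled_monomial C k x) 0 < e" if "x \<in> K" for x
    proof -
      have "dist (scaled_monomial C k x) 0 = (2*C) ^ k / fact k * norm x ^ k"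
        using C by (simp add: scaled_monomial_def norm_mult norm_divide norm_power)
      also have "\<dots> \<le> (2*C) ^ k / fact k * R ^ k"
        using R that C by (intro mult_left_mono power_mono) auto
      also have "\<dots> < e" using small by (simp add: power_mult_distrib field_simps)
      finally show ?thesis .
    qed
    then show "scaled_monomial C k \<in> U" using KU by auto
  qed
qed

lemma compactin_scaled_monomials:
  assumes "C \<ge> 0"
  shows "compactin OC_top (insert (\<lambda>z. 0) (range (scaled_monomial C)))"
  unfolding OC_top_def compactin_subtopology
proof
  show "compactin (unif_family_topology {K. compact K}) (insert (\<lambda>z. 0) (range (scaled_monomial C)))"
    by (rule compactin_sequence_with_limit[OF scaled_monomial_limit[OF assms]])
      (auto simp: topspace_unif_family_topology[OF union_closed_nonempty_compact])
  show "insert (\<lambda>z. 0) (range (scaled_monomial C)) \<subseteq> entire_fns"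
    using entire_fns_const[of 0] entire_fns_monomial unfolding scaled_monomial_def by blast
qed

text \<open>On \<open>(2Cz)\<^sup>k/k!\<close> a functional takes the value \<open>(2C)\<^sup>k \<alpha>\<^sub>k\<close>, so closeness of \<open>\<alpha>, \<beta>\<close> there
  controls the \<open>k\<close>-th terms of \<open>normC C\<close> up to the summable factor \<open>2\<^sup>-\<^sup>k\<close>.\<close>

lemma normC_term_diff_le:
  assumes \<alpha>: "\<alpha> \<in> analytic_functionals" and \<beta>: "\<beta> \<in> analytic_functionals" and C: "C \<ge> 0"
  shows "\<bar>norm (acoeff \<beta> k) * C ^ k - norm (acoeff \<alpha> k) * C ^ k\<bar>
    \<le> norm (\<beta> (scaled_monomial C k) - \<alpha> (scaled_monomial C k)) * (1/2) ^ k"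
proof -
  have "\<beta> (scaled_monomial C k) - \<alpha> (scaled_monomial C k)
      = of_real (2*C) ^ k / fact k * (\<beta> (\<lambda>z. z ^ k) - \<alpha> (\<lambda>z. z ^ k))"
    unfolding scaled_monomial_def right_diff_distrib
    by (simp only: analytic_functional_cmult[OF \<alpha> entire_fns_power]
        analytic_functional_cmult[OF \<beta> entire_fns_power])
  then have monomial: "norm (\<beta> (scaled_monomial C k) - \<alpha> (scaled_monomial C k))
      = (2*C) ^ k / fact k * norm (\<beta> (\<lambda>z. z ^ k) - \<alpha> (\<lambda>z. z ^ k))"
    using C by (simp add: norm_mult norm_divide norm_power)
  have "\<bar>norm (acoeff \<beta> k) * C ^ k - norm (acoeff \<alpha> k) * C ^ k\<bar>
      = \<bar>norm (acoeff \<beta> k) - norm (acoeff \<alpha> k)\<bar> * C ^ k"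
    using C by (simp add: left_diff_distrib[symmetric] abs_mult)
  also have "\<dots> \<le> norm (acoeff \<beta> k - acoeff \<alpha> k) * C ^ k"
    using C by (intro mult_right_mono norm_triangle_ineq3) auto
  also have "\<dots> = ((2*C) ^ k / fact k * norm (\<beta> (\<lambda>z. z ^ k) - \<alpha> (\<lambda>z. z ^ k))) * (1/2) ^ k"
    by (simp add: acoeff_def diff_divide_distrib[symmetric] norm_divide power_mult_distrib field_simps)
  finally show ?thesis unfolding monomial .
qed

lemma continuous_OS_normC:
  assumes C: "C \<ge> 0"
  shows "continuous_OS (normC C)"
  unfolding continuous_OS_def OS_top_def
    continuous_map_unif_family_topology_iff[OF union_closed_nonempty_compactin]
proof (intro ballI allI impI)
  fix \<alpha> and \<epsilon> :: real assume \<alpha>: "\<alpha> \<in> analytic_functionals" and \<epsilon>: "\<epsilon> > 0"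
  define B where "B = insert (\<lambda>z. 0) (range (scaled_monomial C))"
  define e where "e = \<epsilon> / 4"
  have "dist (normC C \<beta>) (normC C \<alpha>) < \<epsilon>"
    if \<beta>: "\<beta> \<in> analytic_functionals" and close: "\<forall>u\<in>B. dist (\<beta> u) (\<alpha> u) < e" for \<beta>
  proof -
    define d where "d k = norm (acoeff \<beta> k) * C ^ k - norm (acoeff \<alpha> k) * C ^ k" for k
    have d: "\<bar>d k\<bar> \<le> e * (1/2) ^ k" for k
    proof -
      have "norm (\<beta> (scaled_monomial C k) - \<alpha> (scaled_monomial C k)) < e"
        using close by (auto simp: B_def dist_norm)
      then show ?thesis
        unfolding d_def by (intro order_trans[OF normC_term_diff_le[OF \<alpha> \<beta> C]] mult_right_mono) auto
    qed
    have sg: "summable (\<lambda>k. e * (1/2::real) ^ k)" by (intro summable_mult summable_geometric) simp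
    have sd: "summable (\<lambda>k. \<bar>d k\<bar>)" by (rule summable_comparison_test[OF _ sg]) (use d in auto)
    have "normC C \<beta> - normC C \<alpha> = suminf d"
      unfolding normC_def d_def by (rule suminf_diff[OF summable_acoeff[OF \<beta> C] summable_acoeff[OF \<alpha> C]])
    then have "dist (normC C \<beta>) (normC C \<alpha>) = \<bar>suminf d\<bar>" by (simp add: dist_real_def)
    also have "\<dots> \<le> (\<Sum>k. \<bar>d k\<bar>)" by (rule summable_rabs[OF sd])
    also have "\<dots> \<le> (\<Sum>k. e * (1/2::real) ^ k)" by (rule suminf_le[OF d sd sg])
    also have "\<dots> = 2 * e"
      using suminf_mult[OF summable_geometric[of "1/2::real"], of e] suminf_geometric[of "1/2::real"]
      by simp
    also have "\<dots> < \<epsilon>" using \<epsilon> by (simp add: e_def)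
    finally show ?thesis .
  qed
  moreover have "compactin OC_top B" unfolding B_def by (rule compactin_scaled_monomials[OF C])
  moreover have "e > 0" using \<epsilon> by (simp add: e_def)
  ultimately show "\<exists>K\<in>{B. compactin OC_top B}. \<exists>e>0. \<forall>\<beta>\<in>analytic_functionals.
      (\<forall>u\<in>K. dist (\<beta> u) (\<alpha> u) < e) \<longrightarrow> dist (normC C \<beta>) (normC C \<alpha>) < \<epsilon>"
    by blast
qed

section \<open>The functionals \<open>\<tau>\<^sup>k\<close>\<close>

definition tau :: "nat \<Rightarrow> (complex \<Rightarrow> complex) \<Rightarrow> complex" where
  "tau k = (\<lambda>u. if u \<in> entire_fns then (deriv ^^ k) u 0 else 0)"

text \<open>Continuity of \<open>\<tau>\<^sup>k\<close> is Cauchy's estimate for the \<open>k\<close>-th derivative on the unit circle.\<close>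

lemma continuous_map_tau: "continuous_map OC_top euclidean (tau k)"
  unfolding OC_top_def continuous_map_unif_family_topology_iff[OF union_closed_nonempty_compact]
proof (intro ballI allI impI)
  fix u :: "complex \<Rightarrow> complex" and \<epsilon> :: real assume u: "u \<in> entire_fns" and \<epsilon>: "\<epsilon> > 0"
  define e where "e = \<epsilon> / (2 * fact k)"
  have "dist (tau k g) (tau k u) < \<epsilon>"
    if g: "g \<in> entire_fns" and close: "\<forall>x\<in>cball 0 1. dist (g x) (u x) < e" for g
  proof -
    have "tau k g - tau k u = (deriv ^^ k) (\<lambda>z. g z - u z) 0"
      using g u higher_deriv_diff[of g UNIV u 0 k] by (simp add: tau_def entire_fns_holomorphic_on)
    moreover have "norm ((deriv ^^ k) (\<lambda>z. g z - u z) 0) \<le> fact k * e / 1 ^ k"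
    proof (rule Cauchy_inequality)
      show "(\<lambda>z. g z - u z) holomorphic_on ball 0 1"
        using entire_fns_diff[OF g u] by (rule entire_fns_holomorphic_on)
      show "continuous_on (cball 0 1) (\<lambda>z. g z - u z)"
        using entire_fns_diff[OF g u] by (intro holomorphic_on_imp_continuous_on entire_fns_holomorphic_on)
      fix x :: complex assume "norm (0 - x) = 1"
      then show "norm (g x - u x) \<le> e" using close by (auto simp: dist_norm less_imp_le)
    qed simp
    ultimately have "dist (tau k g) (tau k u) \<le> fact k * e" by (simp add: dist_norm)
    also have "\<dots> < \<epsilon>" using \<epsilon> by (simp add: e_def)
    finally show ?thesis .
  qed
  moreover have "e > 0" using \<epsilon> by (simp add: e_def)
  ultimately show "\<exists>K\<in>{K. compact K}. \<exists>e>0. \<forall>g\<in>entire_fns.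
      (\<forall>x\<in>K. dist (g x) (u x) < e) \<longrightarrow> dist (tau k g) (tau k u) < \<epsilon>"
    by (intro bexI[of _ "cball 0 1"]) auto
qed

lemma tau_analytic_functional: "tau k \<in> analytic_functionals"
  unfolding analytic_functionals_def
proof (intro CollectI conjI allI impI)
  fix u v assume u: "u \<in> entire_fns" and v: "v \<in> entire_fns"
  show "tau k (\<lambda>z. u z + v z) = tau k u + tau k v"
    using u v higher_deriv_add[of u UNIV v 0 k] by (auto simp: tau_def entire_fns_holomorphic_on)
next
  fix c u assume u: "u \<in> entire_fns"
  show "tau k (\<lambda>z. c * u z) = c * tau k u"
    using u higher_deriv_cmult[of u UNIV 0 k c] by (auto simp: tau_def entire_fns_holomorphic_on)
next
  fix u assume "u \<notin> entire_fns" then show "tau k u = 0" by (simp add: tau_def)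
next
  show "continuous_map OC_top euclidean (tau k)" by (rule continuous_map_tau)
qed

lemma aconv_tau_Suc: "aconv (tau 1) (tau k) = tau (Suc k)"
proof
  fix u :: "complex \<Rightarrow> complex"
  show "aconv (tau 1) (tau k) u = tau (Suc k) u"
  proof (cases "u \<in> entire_fns")
    case True
    have "(\<lambda>s. tau k (\<lambda>t. u (s + t))) = (deriv ^^ k) u"
      using entire_fns_translate[OF True] higher_deriv_translate[OF True]
      by (auto simp: tau_def)
    then show ?thesis using True entire_fns_higher_deriv[OF True, of k] by (simp add: aconv_def tau_def)
  qed (simp add: aconv_def tau_def)
qed

lemma analytic_functionals_add:
  "\<alpha> \<in> analytic_functionals \<Longrightarrow> \<beta> \<in> analytic_functionals \<Longrightarrow> (\<lambda>u. \<alpha> u + \<beta> u) \<in> analytic_functionals"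
  unfolding analytic_functionals_def by (auto intro: continuous_map_add simp: distrib_left)

lemma analytic_functionals_cmult:
  "\<alpha> \<in> analytic_functionals \<Longrightarrow> (\<lambda>u. c * \<alpha> u) \<in> analytic_functionals"
  unfolding analytic_functionals_def
  by (auto simp: distrib_left mult.left_commute continuous_map_atin tendsto_mult_left)

lemma tau_combination_analytic_functional: "(\<lambda>u. \<Sum>k<n. a k * tau k u) \<in> analytic_functionals"
proof (induction n)
  case 0
  then show ?case using analytic_functionals_cmult[OF tau_analytic_functional[of 0], of 0] by simp
next
  case (Suc n)
  then show ?case
    using analytic_functionals_add[OF Suc analytic_functionals_cmult[OF tau_analytic_functional]]
    by simp
qed

section \<open>Density of the finite combinations of the \<open>\<tau>\<^sup>k\<close>\<close>

text \<open>The Taylor truncations of \<open>\<alpha>\<close> converge uniformly on compact subsets of \<open>\<O>(\<complex>)\<close>: if \<open>\<alpha>\<close> is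
  estimated on \<open>cball 0 R\<close>, Cauchy's estimates on \<open>cball 0 (2R)\<close> make the Taylor remainders of all
  \<open>u \<in> B\<close> uniformly small on \<open>cball 0 R\<close>.\<close>

lemma tau_truncation_approx:
  assumes \<alpha>: "\<alpha> \<in> analytic_functionals" and B: "compactin OC_top B" and e: "e > 0"
  shows "\<exists>n. \<forall>u\<in>B. norm (\<alpha> u - (\<Sum>k<n. acoeff \<alpha> k * tau k u)) < e"
proof -
  obtain R M where R: "R > 0" and M: "M > 0" and bound: "\<forall>u\<in>entire_fns. \<forall>S>0.
      (\<forall>z\<in>cball 0 R. norm (u z) \<le> S) \<longrightarrow> norm (\<alpha> u) \<le> M * S"
    using analytic_functional_bound[OF \<alpha>] by blast
  obtain S where S: "S > 0" and BS: "\<forall>u\<in>B. \<forall>z\<in>cball 0 (2*R). norm (u z) \<le> S"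
    using compactin_OC_top_bounded[OF B compact_cball] by blast
  have BE: "B \<subseteq> entire_fns" using B by (auto simp: OC_top_def compactin_subtopology)
  obtain n where n: "(1/2::real) ^ n < e / (2 * M * S)"
    using real_arch_pow_inv[of "e / (2 * M * S)" "1/2"] e M S by auto
  have "norm (\<alpha> u - (\<Sum>k<n. acoeff \<alpha> k * tau k u)) < e" if uB: "u \<in> B" for u
  proof -
    have u: "u \<in> entire_fns" using uB BE by auto
    define g where "g = (\<lambda>z. u z - (\<Sum>k<n. (deriv ^^ k) u 0 / fact k * z ^ k))"
    have "\<alpha> g = \<alpha> u - \<alpha> (\<lambda>z. \<Sum>k<n. (deriv ^^ k) u 0 / fact k * z ^ k)"
      unfolding g_def by (rule analytic_functional_diff[OF \<alpha> u]) (intro entire_fns_sum entire_fns_monomial)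
    also have "\<alpha> (\<lambda>z. \<Sum>k<n. (deriv ^^ k) u 0 / fact k * z ^ k)
        = (\<Sum>k<n. \<alpha> (\<lambda>z. (deriv ^^ k) u 0 / fact k * z ^ k))"
      by (rule analytic_functional_sum[OF \<alpha> finite_lessThan entire_fns_monomial])
    also have "\<dots> = (\<Sum>k<n. acoeff \<alpha> k * tau k u)"
    proof (rule sum.cong[OF refl])
      fix k
      have "\<alpha> (\<lambda>z. (deriv ^^ k) u 0 / fact k * z ^ k) = (deriv ^^ k) u 0 / fact k * \<alpha> (\<lambda>z. z ^ k)"
        by (rule analytic_functional_cmult[OF \<alpha> entire_fns_power])
      then show "\<alpha> (\<lambda>z. (deriv ^^ k) u 0 / fact k * z ^ k) = acoeff \<alpha> k * tau k u"
        using u by (simp add: acoeff_def tau_def)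
    qed
    finally have \<alpha>g: "\<alpha> g = \<alpha> u - (\<Sum>k<n. acoeff \<alpha> k * tau k u)" .
    have "\<forall>z\<in>cball 0 R. norm (g z) \<le> 2 * S * (1/2) ^ n"
      unfolding g_def using taylor_remainder_bound[OF u R] BS uB by simp
    moreover have "g \<in> entire_fns"
      unfolding g_def by (intro entire_fns_diff[OF u] entire_fns_sum entire_fns_monomial)
    ultimately have "norm (\<alpha> g) \<le> M * (2 * S * (1/2) ^ n)" using bound S by simp
    also have "\<dots> < M * (2 * S * (e / (2 * M * S)))"
      using n M S by (intro mult_strict_left_mono) auto
    also have "\<dots> = e" using M S by (simp add: field_simps)
    finally show ?thesis by (simp only: \<alpha>g)
  qed
  then show ?thesis by blast
qed

lemma is_seminorm_OS_add:
  "is_seminorm_OS p \<Longrightarrow> \<alpha> \<in> analytic_functionals \<Longrightarrow> \<beta> \<in> analytic_functionals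
    \<Longrightarrow> p (\<lambda>u. \<alpha> u + \<beta> u) \<le> p \<alpha> + p \<beta>"
  by (simp add: is_seminorm_OS_def)

lemma is_seminorm_OS_cmult:
  "is_seminorm_OS p \<Longrightarrow> \<alpha> \<in> analytic_functionals \<Longrightarrow> p (\<lambda>u. c * \<alpha> u) = norm c * p \<alpha>"
  by (simp add: is_seminorm_OS_def)

lemma is_seminorm_OS_zero: "is_seminorm_OS p \<Longrightarrow> p (\<lambda>u. 0) = 0"
  using is_seminorm_OS_cmult[OF _ tau_analytic_functional, of p 0 0] by simp

lemma is_seminorm_OS_nonneg:
  assumes p: "is_seminorm_OS p" and \<alpha>: "\<alpha> \<in> analytic_functionals"
  shows "0 \<le> p \<alpha>"
  using is_seminorm_OS_add[OF p \<alpha> analytic_functionals_cmult[OF \<alpha>, of "-1"]]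
    is_seminorm_OS_cmult[OF p \<alpha>, of "-1"] is_seminorm_OS_zero[OF p]
  by simp

lemma is_seminorm_OS_tau_combination_le:
  assumes p: "is_seminorm_OS p"
  shows "p (\<lambda>u. \<Sum>k<n. a k * tau k u) \<le> (\<Sum>k<n. norm (a k) * p (tau k))"
proof (induction n)
  case 0
  then show ?case using is_seminorm_OS_zero[OF p] by simp
next
  case (Suc n)
  have "p (\<lambda>u. (\<Sum>k<n. a k * tau k u) + a n * tau n u)
      \<le> p (\<lambda>u. \<Sum>k<n. a k * tau k u) + p (\<lambda>u. a n * tau n u)"
    by (rule is_seminorm_OS_add[OF p tau_combination_analytic_functional
          analytic_functionals_cmult[OF tau_analytic_functional]])
  also have "\<dots> \<le> (\<Sum>k<n. norm (a k) * p (tau k)) + norm (a n) * p (tau n)"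
    using Suc is_seminorm_OS_cmult[OF p tau_analytic_functional] by simp
  finally show ?case by simp
qed

lemma submultiplicative_OS_tau_le:
  assumes p: "is_seminorm_OS p" and sm: "submultiplicative_OS p"
  shows "p (tau k) \<le> p (tau 0) * p (tau 1) ^ k"
proof (induction k)
  case (Suc k)
  have "p (tau (Suc k)) \<le> p (tau 1) * p (tau k)"
    using sm tau_analytic_functional unfolding submultiplicative_OS_def aconv_tau_Suc[symmetric]
    by simp
  also have "\<dots> \<le> p (tau 1) * (p (tau 0) * p (tau 1) ^ k)"
    using Suc is_seminorm_OS_nonneg[OF p tau_analytic_functional] by (rule mult_left_mono)
  finally show ?case by (simp add: mult_ac)
qed simp

lemma continuous_seminorm_OS_le_normC:
  assumes p: "is_seminorm_OS p" and cont: "continuous_OS p"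
    and C: "C \<ge> 0" and M: "M \<ge> 0" and ptau: "\<And>k. p (tau k) \<le> M * C ^ k"
    and \<alpha>: "\<alpha> \<in> analytic_functionals"
  shows "p \<alpha> \<le> M * normC C \<alpha>"
proof (rule field_le_epsilon)
  fix \<epsilon> :: real assume \<epsilon>: "\<epsilon> > 0"
  obtain B e where B: "compactin OC_top B" and e: "e > 0" and Be: "\<forall>\<beta>\<in>analytic_functionals.
      (\<forall>u\<in>B. dist (\<beta> u) (\<alpha> u) < e) \<longrightarrow> dist (p \<beta>) (p \<alpha>) < \<epsilon>"
    using cont \<alpha> \<epsilon>
    unfolding continuous_OS_def OS_top_def
      continuous_map_unif_family_topology_iff[OF union_closed_nonempty_compactin]
    by blast
  obtain n where n: "\<forall>u\<in>B. norm (\<alpha> u - (\<Sum>k<n. acoeff \<alpha> k * tau k u)) < e"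
    using tau_truncation_approx[OF \<alpha> B e] by blast
  define s where "s = (\<lambda>u. \<Sum>k<n. acoeff \<alpha> k * tau k u)"
  have "\<forall>u\<in>B. dist (s u) (\<alpha> u) < e" using n by (simp add: s_def dist_norm norm_minus_commute)
  moreover have "s \<in> analytic_functionals" unfolding s_def by (rule tau_combination_analytic_functional)
  ultimately have "dist (p s) (p \<alpha>) < \<epsilon>" using Be by blast
  then have "p \<alpha> < p s + \<epsilon>" by (simp add: dist_real_def)
  also have "p s \<le> (\<Sum>k<n. norm (acoeff \<alpha> k) * p (tau k))"
    unfolding s_def by (rule is_seminorm_OS_tau_combination_le[OF p])
  also have "\<dots> \<le> (\<Sum>k<n. norm (acoeff \<alpha> k) * (M * C ^ k))"
    by (intro sum_mono mult_left_mono ptau) auto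
  also have "\<dots> = M * (\<Sum>k<n. norm (acoeff \<alpha> k) * C ^ k)"
    by (simp add: sum_distrib_left mult_ac)
  also have "\<dots> \<le> M * normC C \<alpha>"
    unfolding normC_def using M C
    by (intro mult_left_mono sum_le_suminf summable_acoeff[OF \<alpha>]) auto
  finally show "p \<alpha> \<le> M * normC C \<alpha> + \<epsilon>" by simp
qed

theorem mainTheorem14:
  shows "(\<forall>C::real. C \<ge> 0 \<longrightarrow>
            is_seminorm_OS (normC C) \<and> continuous_OS (normC C) \<and> submultiplicative_OS (normC C))
       \<and> (\<forall>p. is_seminorm_OS p \<and> continuous_OS p \<and> submultiplicative_OS p \<longrightarrow>
            (\<exists>C::real. C \<ge> 0 \<and> (\<exists>M::real. M > 0 \<and>
               (\<forall>\<alpha>\<in>analytic_functionals. p \<alpha> \<le> M * normC C \<alpha>))))"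
proof (intro conjI allI impI; (elim conjE)?)
  fix C :: real assume "C \<ge> 0"
  then show "is_seminorm_OS (normC C)" "continuous_OS (normC C)" "submultiplicative_OS (normC C)"
    by (simp_all add: is_seminorm_OS_normC continuous_OS_normC submultiplicative_OS_normC)
next
  fix p assume p: "is_seminorm_OS p" and cont: "continuous_OS p" and sm: "submultiplicative_OS p"
  define C where "C = p (tau 1)"
  define M where "M = p (tau 0) + 1"
  have C: "C \<ge> 0" and M: "M > 0"
    using is_seminorm_OS_nonneg[OF p tau_analytic_functional, of 1]
      is_seminorm_OS_nonneg[OF p tau_analytic_functional, of 0]
    by (simp_all add: C_def M_def)
  have "p (tau k) \<le> M * C ^ k" for k
    using submultiplicative_OS_tau_le[OF p sm, of k] zero_le_power[OF C, of k]
    by (simp add: C_def M_def distrib_right)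
  then have "\<forall>\<alpha>\<in>analytic_functionals. p \<alpha> \<le> M * normC C \<alpha>"
    using continuous_seminorm_OS_le_normC[OF p cont C] M by simp
  then show "\<exists>C\<ge>0. \<exists>M>0. \<forall>\<alpha>\<in>analytic_functionals. p \<alpha> \<le> M * normC C \<alpha>"
    using C M by blast
qed

end
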